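(* Let $G$ and $H$ be groups, $\Psi\colon G\to\operatorname{Aut}H$ a group homomorphism, and $B\colon H\to G$ a relative Rota--Baxter operator on $H$ with respect to $(G,\Psi)$. If $\varphi$ lies in the center of $\operatorname{Aut}H$, then $B\varphi\colon H\to G$ is also a relative Rota--Baxter operator on $H$ with respect to $(G,\Psi)$.
   Context: A relative Rota--Baxter operator on $H$ with respect to $(G,\Psi)$ is a map $B\colon H\to G$ with $B(h)B(k)=B(h\Psi_{B(h)}(k))$ for all $h,k\in H$. *)

theory Defs
  imports "HOL-Algebra.Algebra"
begin

definition group_center :: "('a, 'b) monoid_scheme \<Rightarrow> 'a set" where
  "group_center G = {z \<in> carrier G. \<forall>x \<in> carrier G. z \<otimes>\<^bsub>G\<^esub> x = x \<otimes>\<^bsub>G\<^esub> z}"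

definition rel_RB_operator ::
  "('g, 'c) monoid_scheme \<Rightarrow> ('h, 'd) monoid_scheme \<Rightarrow> ('g \<Rightarrow> 'h \<Rightarrow> 'h) \<Rightarrow> ('h \<Rightarrow> 'g) \<Rightarrow> bool" where
  "rel_RB_operator G H Psi B \<longleftrightarrow>
     B \<in> carrier H \<rightarrow> carrier G \<and>
     (\<forall>h \<in> carrier H. \<forall>k \<in> carrier H.
        B h \<otimes>\<^bsub>G\<^esub> B k = B (h \<otimes>\<^bsub>H\<^esub> Psi (B h) k))"

end

theory Submission
  imports Defs
begin

text \<open>If \<phi> is an endomorphism of H commuting with every Psi g, then \<phi> can be pulled out of
  the Rota--Baxter identity for the arguments \<phi> h and \<phi> k:
  \<phi> h \<cdot> Psi g (\<phi> k) = \<phi> (h \<cdot> Psi g k). A central automorphism commutes with every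
  automorphism, in particular with the image of Psi.\<close>

lemma AutoGroup_mult_apply:
  assumes "f \<in> auto H" and "g \<in> auto H" and "x \<in> carrier H"
  shows "(f \<otimes>\<^bsub>AutoGroup H\<^esub> g) x = f (g x)"
  using assms by (simp add: AutoGroup_def BijGroup_def auto_def compose_def)

lemma group_center_AutoGroup_commute:
  assumes "\<phi> \<in> group_center (AutoGroup H)" and "\<psi> \<in> auto H" and "x \<in> carrier H"
  shows "\<phi> (\<psi> x) = \<psi> (\<phi> x)"
proof -
  have "\<phi> \<in> auto H"
    and "\<phi> \<otimes>\<^bsub>AutoGroup H\<^esub> \<psi> = \<psi> \<otimes>\<^bsub>AutoGroup H\<^esub> \<phi>"
    using assms(1,2) by (auto simp: group_center_def AutoGroup_def)
  then show ?thesis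
    using assms(2,3) by (metis AutoGroup_mult_apply)
qed

lemma rel_RB_operator_comp_commuting_endo:
  assumes RB: "rel_RB_operator G H Psi B"
    and \<phi>: "\<phi> \<in> hom H H"
    and Psi_endo: "\<And>g. g \<in> carrier G \<Longrightarrow> Psi g \<in> hom H H"
    and commute: "\<And>g x. g \<in> carrier G \<Longrightarrow> x \<in> carrier H \<Longrightarrow> \<phi> (Psi g x) = Psi g (\<phi> x)"
  shows "rel_RB_operator G H Psi (B \<circ> \<phi>)"
  unfolding rel_RB_operator_def
proof (intro conjI ballI)
  have B: "B \<in> carrier H \<rightarrow> carrier G"
    and B_mult: "\<And>h k. h \<in> carrier H \<Longrightarrow> k \<in> carrier H \<Longrightarrow>
                   B h \<otimes>\<^bsub>G\<^esub> B k = B (h \<otimes>\<^bsub>H\<^esub> Psi (B h) k)"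
    using RB by (auto simp: rel_RB_operator_def)
  have \<phi>_closed: "\<And>x. x \<in> carrier H \<Longrightarrow> \<phi> x \<in> carrier H"
    using \<phi> by (simp add: hom_in_carrier)
  show "B \<circ> \<phi> \<in> carrier H \<rightarrow> carrier G"
    using B \<phi>_closed by auto
  fix h k
  assume h: "h \<in> carrier H" and k: "k \<in> carrier H"
  define g where "g = B (\<phi> h)"
  have g: "g \<in> carrier G"
    using B \<phi>_closed h by (auto simp: g_def)
  have Psi_k: "Psi g k \<in> carrier H"
    using Psi_endo[OF g] k by (simp add: hom_in_carrier)
  have "(B \<circ> \<phi>) h \<otimes>\<^bsub>G\<^esub> (B \<circ> \<phi>) k = B (\<phi> h \<otimes>\<^bsub>H\<^esub> Psi g (\<phi> k))"
    using B_mult[OF \<phi>_closed[OF h] \<phi>_closed[OF k]] by (simp add: g_def)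
  also have "\<phi> h \<otimes>\<^bsub>H\<^esub> Psi g (\<phi> k) = \<phi> (h \<otimes>\<^bsub>H\<^esub> Psi g k)"
    using \<phi> h Psi_k commute[OF g k] by (simp add: hom_mult)
  finally show "(B \<circ> \<phi>) h \<otimes>\<^bsub>G\<^esub> (B \<circ> \<phi>) k = (B \<circ> \<phi>) (h \<otimes>\<^bsub>H\<^esub> Psi ((B \<circ> \<phi>) h) k)"
    by (simp add: g_def)
qed

theorem corollary3p7:
  fixes G :: "('g, 'c) monoid_scheme" and H :: "('h, 'd) monoid_scheme"
    and Psi :: "'g \<Rightarrow> 'h \<Rightarrow> 'h" and B :: "'h \<Rightarrow> 'g" and \<phi> :: "'h \<Rightarrow> 'h"
  assumes "group G" and "group H"
    and "Psi \<in> hom G (AutoGroup H)"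
    and "rel_RB_operator G H Psi B"
    and "\<phi> \<in> group_center (AutoGroup H)"
  shows "rel_RB_operator G H Psi (B \<circ> \<phi>)"
proof -
  have Psi_auto: "\<And>g. g \<in> carrier G \<Longrightarrow> Psi g \<in> auto H"
    using assms(3) hom_in_carrier by (fastforce simp: AutoGroup_def)
  have "\<phi> \<in> hom H H"
    using assms(5) by (simp add: group_center_def AutoGroup_def auto_def)
  moreover have "\<And>g. g \<in> carrier G \<Longrightarrow> Psi g \<in> hom H H"
    using Psi_auto by (simp add: auto_def)
  ultimately show ?thesis
    using rel_RB_operator_comp_commuting_endo assms(4)
      group_center_AutoGroup_commute[OF assms(5) Psi_auto]
    by metis
qed

end
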